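(* Let $(T,A)$ be a uniform cocycle on a probability space $(\Delta,\mu)$ and, for $\kappa>0$, let $$\omega(\kappa)=\sup_{\mu(U)\le\kappa}\ \sup_{N>0}\int_U\frac1N\ln\|A_N(x)\|_0\,d\mu(x),$$ the first supremum being over measurable sets $U\subset\Delta$ with $\mu(U)\le\kappa$. Then $\lim_{\kappa\to0}\omega(\kappa)=0$.
   Context: A cocycle is a pair $(T,A)$ with $T:\Delta\to\Delta$ and $A:\Delta\to\mathrm{GL}(p,\mathbb{R})$, viewed as the skew product $(x,w)\mapsto(T(x),A(x)w)$; its iterates are $(T^n,A_n)$ with $A_n(x)=A(T^{n-1}(x))\cdots A(x)$. For $B\in\mathrm{GL}(p,\mathbb{R})$, $\|B\|_0=\max\{\|B\|,\|B^{-1}\|\}$. The cocycle is a uniform cocycle if $(\Delta,\mu)$ is a probability space, $\mu$ is a $T$-invariant ergodic measure ($T$ measurable), $A$ is measurable and $\int_\Delta\ln\|A(x)\|_0\,d\mu(x)<\infty$. *)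

theory Defs
  imports "HOL-Probability.Probability"
begin

definition mat_opnorm :: "real^'p^'p \<Rightarrow> real" where
  "mat_opnorm B = onorm (\<lambda>v. B *v v)"

definition norm0 :: "real^'p^'p \<Rightarrow> real" where
  "norm0 B = max (mat_opnorm B) (mat_opnorm (matrix_inv B))"

primrec cocycle_iter :: "('a \<Rightarrow> 'a) \<Rightarrow> ('a \<Rightarrow> real^'p^'p) \<Rightarrow> nat \<Rightarrow> 'a \<Rightarrow> real^'p^'p" where
  "cocycle_iter T A 0 x = mat 1"
| "cocycle_iter T A (Suc n) x = A ((T ^^ n) x) ** cocycle_iter T A n x"

definition ergodic_map :: "'a measure \<Rightarrow> ('a \<Rightarrow> 'a) \<Rightarrow> bool" where
  "ergodic_map M T \<longleftrightarrow>
     T \<in> measurable M M \<and> distr M M T = M \<and>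
     (\<forall>U \<in> sets M. T -` U \<inter> space M = U \<longrightarrow> measure M U = 0 \<or> measure M U = 1)"

definition uniform_cocycle :: "'a measure \<Rightarrow> ('a \<Rightarrow> 'a) \<Rightarrow> ('a \<Rightarrow> real^'p^'p) \<Rightarrow> bool" where
  "uniform_cocycle M T A \<longleftrightarrow>
     prob_space M \<and> ergodic_map M T \<and>
     A \<in> borel_measurable M \<and> (\<forall>x \<in> space M. invertible (A x)) \<and>
     (\<integral>\<^sup>+ x. ennreal (ln (norm0 (A x))) \<partial>M) < \<infinity>"

definition cocycle_omega :: "'a measure \<Rightarrow> ('a \<Rightarrow> 'a) \<Rightarrow> ('a \<Rightarrow> real^'p^'p) \<Rightarrow> real \<Rightarrow> ereal" where
  "cocycle_omega M T A \<kappa> =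
     (SUP U \<in> {U \<in> sets M. measure M U \<le> \<kappa>}. SUP N \<in> {N::nat. N > 0}.
        ereal (\<integral>x\<in>U. (1 / real N) * ln (norm0 (cocycle_iter T A N x)) \<partial>M))"

end

theory Submission
  imports Defs
begin

text \<open>Submultiplicativity of the operator norm gives
  \<open>ln \<parallel>A\<^sub>N x\<parallel>\<^sub>0 \<le> \<Sum>i<N. g (T\<^sup>i x)\<close> with \<open>g = ln \<parallel>A\<parallel>\<^sub>0 \<ge> 0\<close> integrable.
  Splitting \<open>g \<le> K + (g - K)\<^sup>+\<close> and using the \<open>T\<close>-invariance of \<open>\<mu>\<close>,
  \<open>(1/N) \<integral>\<^sub>U ln \<parallel>A\<^sub>N\<parallel>\<^sub>0 \<le> K \<mu>(U) + \<integral> (g - K)\<^sup>+\<close> for all \<open>U\<close>, \<open>N\<close> and \<open>K \<ge> 0\<close>,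
  hence \<open>0 \<le> \<omega>(\<kappa>) \<le> K \<kappa> + \<integral> (g - K)\<^sup>+\<close>. The last integral tends to \<open>0\<close> as
  \<open>K \<rightarrow> \<infinity>\<close> by dominated convergence.\<close>

lemma mat_opnorm_nonneg: "0 \<le> mat_opnorm (B :: real^'p^'p)"
  unfolding mat_opnorm_def by (intro onorm_pos_le matrix_vector_mul_bounded_linear)

lemma mat_opnorm_mat_1: "mat_opnorm (mat 1 :: real^'p^'p) = 1"
proof -
  have "(*v) (mat 1 :: real^'p^'p) = (\<lambda>v. v)" by (simp add: fun_eq_iff)
  then show ?thesis unfolding mat_opnorm_def by (simp add: onorm_id)
qed

lemma mat_opnorm_mult_le:
  fixes B C :: "real^'p^'p"
  shows "mat_opnorm (B ** C) \<le> mat_opnorm B * mat_opnorm C"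
proof -
  have "mat_opnorm (B ** C) = onorm ((\<lambda>v. B *v v) \<circ> (\<lambda>v. C *v v))"
    unfolding mat_opnorm_def by (simp add: o_def matrix_vector_mul_assoc)
  also have "\<dots> \<le> mat_opnorm B * mat_opnorm C"
    unfolding mat_opnorm_def by (intro onorm_compose matrix_vector_mul_bounded_linear)
  finally show ?thesis .
qed

lemma mat_opnorm_le_add_norm_diff:
  fixes B C :: "real^'p^'p"
  shows "mat_opnorm B \<le> mat_opnorm C + real CARD('p) * real CARD('p) * norm (B - C)"
proof -
  have "mat_opnorm B = onorm (\<lambda>v. C *v v + (B - C) *v v)"
    unfolding mat_opnorm_def by (simp add: matrix_vector_mult_add_rdistrib[symmetric])
  also have "\<dots> \<le> mat_opnorm C + mat_opnorm (B - C)"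
    unfolding mat_opnorm_def by (intro onorm_triangle matrix_vector_mul_bounded_linear)
  also have "mat_opnorm (B - C) \<le> real CARD('p) * real CARD('p) * norm (B - C)"
    unfolding mat_opnorm_def
  proof (rule onorm_le_matrix_component)
    fix i j
    have "\<bar>(B - C) $ i $ j\<bar> \<le> norm ((B - C) $ i)" by (rule component_le_norm_cart)
    also have "\<dots> \<le> norm (B - C)" by (rule Finite_Cartesian_Product.norm_nth_le)
    finally show "\<bar>(B - C) $ i $ j\<bar> \<le> norm (B - C)" .
  qed
  finally show ?thesis by simp
qed

lemma continuous_on_mat_opnorm: "continuous_on S (mat_opnorm :: real^'p^'p \<Rightarrow> real)"
proof -
  let ?K = "real CARD('p) * real CARD('p)"
  have "?K-lipschitz_on S (mat_opnorm :: real^'p^'p \<Rightarrow> real)"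
  proof (rule lipschitz_onI)
    fix B C :: "real^'p^'p"
    have "mat_opnorm B \<le> mat_opnorm C + ?K * norm (B - C)"
      and "mat_opnorm C \<le> mat_opnorm B + ?K * norm (C - B)"
      by (rule mat_opnorm_le_add_norm_diff)+
    then show "dist (mat_opnorm B) (mat_opnorm C) \<le> ?K * dist B C"
      by (simp add: dist_real_def dist_norm norm_minus_commute abs_le_iff)
  qed simp
  then show ?thesis by (rule lipschitz_on_continuous_on)
qed

lemma matrix_inv_right:
  fixes B :: "'a::semiring_1^'n^'m"
  assumes "invertible B"
  shows "B ** matrix_inv B = mat 1"
  using someI_ex[OF assms[unfolded invertible_def]] unfolding matrix_inv_def by auto

lemma matrix_inv_left:
  fixes B :: "'a::semiring_1^'n^'m"
  assumes "invertible B"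
  shows "matrix_inv B ** B = mat 1"
  using someI_ex[OF assms[unfolded invertible_def]] unfolding matrix_inv_def by auto

lemma matrix_inv_unique:
  fixes B :: "'a::semiring_1^'n^'n" and X :: "'a^'n^'n"
  assumes "invertible B" "B ** X = mat 1"
  shows "matrix_inv B = X"
  by (metis assms matrix_inv_left matrix_mul_assoc matrix_mul_lid matrix_mul_rid)

lemma matrix_inv_mat_1: "matrix_inv (mat 1 :: 'a::semiring_1^'n^'n) = mat 1"
  by (rule matrix_inv_unique) (auto simp: invertible_def)

lemma matrix_inv_mult:
  fixes B C :: "'a::semiring_1^'n^'n"
  assumes "invertible B" "invertible C"
  shows "matrix_inv (B ** C) = matrix_inv C ** matrix_inv B"
proof (rule matrix_inv_unique)
  show "invertible (B ** C)" using assms by (rule invertible_mult)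
  have "B ** C ** (matrix_inv C ** matrix_inv B) = B ** (C ** matrix_inv C) ** matrix_inv B"
    by (simp add: matrix_mul_assoc)
  then show "B ** C ** (matrix_inv C ** matrix_inv B) = mat 1"
    by (simp add: matrix_inv_right assms)
qed

text \<open>Unlike \<^const>\<open>matrix_inv\<close>, which is defined by choice, Cramer's formula is visibly
  continuous where \<open>det B \<noteq> 0\<close>.\<close>

definition cramer_inv :: "real^'p^'p \<Rightarrow> real^'p^'p" where
  "cramer_inv B = (\<chi> i k. det (\<chi> r c. if c = i then axis k 1 $ r else B $ r $ c) / det B)"

lemma continuous_on_cramer_inv: "continuous_on {B. det B \<noteq> 0} (cramer_inv :: real^'p^'p \<Rightarrow> _)"
proof -
  have if_const: "continuous_on S (\<lambda>x. if P then a else f x)" if "continuous_on S f"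
    for S P a and f :: "real^'p^'p \<Rightarrow> real"
    using that by (cases P) auto
  show ?thesis
    unfolding cramer_inv_def det_def by (intro continuous_intros if_const) (auto simp: det_def)
qed

lemma matrix_inv_eq_cramer_inv:
  fixes B :: "real^'p^'p"
  assumes "invertible B"
  shows "matrix_inv B = cramer_inv B"
proof -
  have "matrix_inv B $ i $ k = cramer_inv B $ i $ k" for i k
  proof -
    have "B *v (matrix_inv B *v axis k 1) = axis k 1"
      by (simp add: matrix_vector_mul_assoc matrix_inv_right[OF assms])
    then have "matrix_inv B *v axis k 1
        = (\<chi> j. det (\<chi> r c. if c = j then axis k 1 $ r else B $ r $ c) / det B)"
      using cramer assms invertible_det_nz by blast
    then show ?thesis
      by (simp add: cramer_inv_def matrix_vector_mult_basis column_def vec_eq_iff)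
  qed
  then show ?thesis by (simp add: vec_eq_iff)
qed

lemma norm0_ge_1:
  fixes B :: "real^'p^'p"
  assumes "invertible B"
  shows "1 \<le> norm0 B"
proof (rule ccontr)
  assume "\<not> 1 \<le> norm0 B"
  then have less: "mat_opnorm B < 1" "mat_opnorm (matrix_inv B) < 1" by (auto simp: norm0_def)
  have "1 = mat_opnorm (B ** matrix_inv B)" by (simp add: matrix_inv_right[OF assms] mat_opnorm_mat_1)
  also have "\<dots> \<le> mat_opnorm B * mat_opnorm (matrix_inv B)" by (rule mat_opnorm_mult_le)
  also have "\<dots> \<le> mat_opnorm B"
    using less mat_opnorm_nonneg[of B] by (intro mult_left_le) auto
  finally show False using less by simp
qed

lemma norm0_mat_1: "norm0 (mat 1 :: real^'p^'p) = 1"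
  by (simp add: norm0_def matrix_inv_mat_1 mat_opnorm_mat_1)

lemma norm0_mult_le:
  fixes B C :: "real^'p^'p"
  assumes "invertible B" "invertible C"
  shows "norm0 (B ** C) \<le> norm0 B * norm0 C"
proof -
  have "mat_opnorm (B ** C) \<le> mat_opnorm B * mat_opnorm C" by (rule mat_opnorm_mult_le)
  also have "\<dots> \<le> norm0 B * norm0 C"
    by (intro mult_mono) (auto simp: norm0_def mat_opnorm_nonneg le_max_iff_disj)
  finally have direct: "mat_opnorm (B ** C) \<le> norm0 B * norm0 C" .
  have "mat_opnorm (matrix_inv (B ** C)) \<le> mat_opnorm (matrix_inv C) * mat_opnorm (matrix_inv B)"
    by (simp add: matrix_inv_mult assms mat_opnorm_mult_le)
  also have "\<dots> \<le> norm0 C * norm0 B"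
    by (intro mult_mono) (auto simp: norm0_def mat_opnorm_nonneg le_max_iff_disj)
  finally have inverse: "mat_opnorm (matrix_inv (B ** C)) \<le> norm0 B * norm0 C"
    by (simp add: mult.commute)
  show ?thesis using direct inverse by (simp add: norm0_def)
qed

lemma borel_measurable_norm0:
  fixes F :: "'a \<Rightarrow> real^'p^'p"
  assumes F: "F \<in> borel_measurable M" and inv: "\<And>x. x \<in> space M \<Longrightarrow> invertible (F x)"
  shows "(\<lambda>x. norm0 (F x)) \<in> borel_measurable M"
proof -
  define S where "S = {B :: real^'p^'p. det B \<noteq> 0}"
  define H where "H B = (if B \<in> S then max (mat_opnorm B) (mat_opnorm (cramer_inv B)) else 0)"
    for B :: "real^'p^'p"
  have "continuous_on UNIV (det :: real^'p^'p \<Rightarrow> real)"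
    unfolding det_def by (intro continuous_intros)
  then have "open S"
    unfolding S_def using open_Collect_neq[of det "\<lambda>_. 0"] by simp
  moreover have "continuous_on S (\<lambda>B. max (mat_opnorm B) (mat_opnorm (cramer_inv B)))"
    unfolding S_def
    by (intro continuous_on_max continuous_on_mat_opnorm
        continuous_on_compose2[OF continuous_on_mat_opnorm continuous_on_cramer_inv]) auto
  ultimately have "H \<in> borel_measurable borel"
    unfolding H_def by (intro borel_measurable_continuous_on_if[OF borel_open _ continuous_on_const])
  then have "(\<lambda>x. H (F x)) \<in> borel_measurable M"
    using measurable_comp[OF F] by (simp add: comp_def)
  moreover have "H (F x) = norm0 (F x)" if "x \<in> space M" for x
    using inv[OF that] by (simp add: H_def S_def norm0_def matrix_inv_eq_cramer_inv invertible_det_nz)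
  ultimately show ?thesis
    using measurable_cong[of M "\<lambda>x. H (F x)" "\<lambda>x. norm0 (F x)"] by blast
qed

lemma invertible_cocycle_iter:
  fixes A :: "'a \<Rightarrow> real^'p^'p"
  assumes "\<And>i. invertible (A ((T ^^ i) x))"
  shows "invertible (cocycle_iter T A n x)"
proof (induction n)
  case 0
  show ?case by (auto simp: invertible_def)
next
  case (Suc n)
  then show ?case by (simp add: invertible_mult assms)
qed

lemma ln_norm0_cocycle_iter_le:
  fixes A :: "'a \<Rightarrow> real^'p^'p"
  assumes inv: "\<And>i. invertible (A ((T ^^ i) x))"
  shows "ln (norm0 (cocycle_iter T A n x)) \<le> (\<Sum>i<n. ln (norm0 (A ((T ^^ i) x))))"
proof (induction n)
  case 0
  show ?case by (simp add: norm0_mat_1)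
next
  case (Suc n)
  let ?B = "A ((T ^^ n) x)" and ?C = "cocycle_iter T A n x"
  have invC: "invertible ?C" using inv by (rule invertible_cocycle_iter)
  have "ln (norm0 (?B ** ?C)) \<le> ln (norm0 ?B * norm0 ?C)"
    using norm0_mult_le[OF inv[of n] invC] norm0_ge_1[OF invertible_mult[OF inv[of n] invC]]
    by (intro ln_mono) auto
  also have "\<dots> = ln (norm0 ?B) + ln (norm0 ?C)"
    using norm0_ge_1[OF inv[of n]] norm0_ge_1[OF invC] by (simp add: ln_mult)
  finally show ?case using Suc by simp
qed

lemma distr_funpow_eq:
  assumes T: "T \<in> measurable M M" and "distr M M T = M"
  shows "distr M M (T ^^ n) = M"
proof (induction n)
  case 0
  show ?case by (simp add: distr_id2)
next
  case (Suc n)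
  have "distr M M (T ^^ Suc n) = distr (distr M M (T ^^ n)) M T"
    by (simp add: distr_distr[OF T measurable_compose_n[OF T]])
  then show ?case using Suc.IH assms(2) by (simp only:)
qed

lemma integral_birkhoff_sum:
  fixes h :: "'a \<Rightarrow> real"
  assumes T: "T \<in> measurable M M" and invariant: "distr M M T = M" and h: "integrable M h"
  shows "integrable M (\<lambda>x. \<Sum>i<N. h ((T ^^ i) x))"
    and "(\<integral>x. (\<Sum>i<N. h ((T ^^ i) x)) \<partial>M) = real N * (\<integral>x. h x \<partial>M)"
proof -
  have hm[measurable]: "h \<in> borel_measurable M" using h by auto
  have integrable_i: "integrable M (\<lambda>x. h ((T ^^ i) x))" for i
    using h distr_funpow_eq[OF T invariant, of i]
    by (subst integrable_distr_eq[OF measurable_compose_n[OF T], symmetric]) simp_all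
  have integral_i: "(\<integral>x. h ((T ^^ i) x) \<partial>M) = (\<integral>x. h x \<partial>M)" for i
    using integral_distr[OF measurable_compose_n[OF T] hm, of i] distr_funpow_eq[OF T invariant, of i]
    by simp
  show "integrable M (\<lambda>x. \<Sum>i<N. h ((T ^^ i) x))" using integrable_i by auto
  show "(\<integral>x. (\<Sum>i<N. h ((T ^^ i) x)) \<partial>M) = real N * (\<integral>x. h x \<partial>M)"
    using integrable_i by (simp add: integral_i)
qed

lemma tendsto_integral_excess_at_top:
  fixes g :: "'a \<Rightarrow> real"
  assumes g: "integrable M g"
  shows "((\<lambda>K. \<integral>x. max (g x - K) 0 \<partial>M) \<longlongrightarrow> 0) at_top"
proof -
  have [measurable]: "g \<in> borel_measurable M" using g by auto
  have "((\<lambda>K. \<integral>x. max (g x - K) 0 \<partial>M) \<longlongrightarrow> (\<integral>x. 0 \<partial>M)) at_top"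
  proof (rule integral_dominated_convergence_at_top[where w="\<lambda>x. \<bar>g x\<bar>"])
    show "AE x in M. ((\<lambda>K. max (g x - K) 0) \<longlongrightarrow> 0) at_top"
    proof (rule AE_I2)
      fix x
      have "\<forall>\<^sub>F K in at_top. max (g x - K) 0 = 0"
        using eventually_ge_at_top[of "g x"] by eventually_elim auto
      then show "((\<lambda>K. max (g x - K) 0) \<longlongrightarrow> 0) at_top" by (rule tendsto_eventually)
    qed
    show "\<forall>\<^sub>F K in at_top. AE x in M. norm (max (g x - K) 0) \<le> \<bar>g x\<bar>"
      using eventually_ge_at_top[of "0::real"] by eventually_elim auto
  qed (use g in auto)
  then show ?thesis by simp
qed

text \<open>\<open>f\<close> need not be integrable: if it is not, the left-hand side is \<open>0\<close> by convention.\<close>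

lemma set_integral_le_by_birkhoff_sum:
  fixes f g :: "'a \<Rightarrow> real" and N :: nat
  assumes "finite_measure M" and T: "T \<in> measurable M M" and invariant: "distr M M T = M"
    and g: "integrable M g" and U: "U \<in> sets M" and N: "N > 0" and K: "0 \<le> K"
    and f_le: "\<And>x. x \<in> U \<Longrightarrow> f x \<le> (\<Sum>i<N. g ((T ^^ i) x))"
  shows "(\<integral>x\<in>U. (1 / real N) * f x \<partial>M) \<le> K * measure M U + (\<integral>x. max (g x - K) 0 \<partial>M)"
proof -
  interpret finite_measure M by fact
  define e where "e x = max (g x - K) 0" for x
  define R where "R x = K * indicator U x + (1 / real N) * (\<Sum>i<N. e ((T ^^ i) x))" for x
  have e: "integrable M e" using g unfolding e_def by auto
  have indicator_U: "integrable M (\<lambda>x. K * indicator U x :: real)"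
    using U by (intro integrable_mult_right integrable_real_indicator) (auto simp: less_top[symmetric])
  note birkhoff = integral_birkhoff_sum[OF T invariant e]
  have "(\<integral>x\<in>U. (1 / real N) * f x \<partial>M) \<le> (\<integral>x. R x \<partial>M)"
    unfolding set_lebesgue_integral_def
  proof (rule integral_mono')
    show "integrable M R"
      unfolding R_def using indicator_U birkhoff(1) by auto
    show "0 \<le> R x" for x
      unfolding R_def e_def using K by (intro add_nonneg_nonneg mult_nonneg_nonneg sum_nonneg) auto
    show "indicator U x *\<^sub>R ((1 / real N) * f x) \<le> R x" for x
    proof (cases "x \<in> U")
      case False
      then show ?thesis using \<open>\<And>x. 0 \<le> R x\<close> by simp
    next
      case True
      have "f x \<le> (\<Sum>i<N. K + e ((T ^^ i) x))"
        using f_le[OF True] by (rule order_trans) (auto intro: sum_mono simp: e_def)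
      then have "(1 / real N) * f x \<le> (1 / real N) * (real N * K + (\<Sum>i<N. e ((T ^^ i) x)))"
        using N by (intro mult_left_mono) (auto simp: sum.distrib)
      also have "\<dots> = R x" using N True by (simp add: R_def field_simps)
      finally show ?thesis using True by simp
    qed
  qed
  also have "(\<integral>x. R x \<partial>M) = K * measure M U + (\<integral>x. e x \<partial>M)"
    unfolding R_def using indicator_U birkhoff N U by simp
  finally show ?thesis by (simp add: e_def)
qed

lemma integrable_ln_norm0:
  assumes "uniform_cocycle M T A"
  shows "integrable M (\<lambda>x. ln (norm0 (A x)))"
proof (rule integrableI_nonneg)
  have "A \<in> borel_measurable M" and inv: "\<And>x. x \<in> space M \<Longrightarrow> invertible (A x)"
    using assms by (auto simp: uniform_cocycle_def)
  then have "(\<lambda>x. norm0 (A x)) \<in> borel_measurable M" by (rule borel_measurable_norm0)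
  then show "(\<lambda>x. ln (norm0 (A x))) \<in> borel_measurable M" by measurable
  show "AE x in M. 0 \<le> ln (norm0 (A x))"
    using norm0_ge_1[OF inv] by (intro AE_I2) simp
  show "(\<integral>\<^sup>+ x. ennreal (ln (norm0 (A x))) \<partial>M) < \<infinity>"
    using assms by (simp add: uniform_cocycle_def)
qed

lemma cocycle_omega_nonneg:
  assumes "0 \<le> \<kappa>"
  shows "0 \<le> cocycle_omega M T A \<kappa>"
proof -
  have "0 = ereal (\<integral>x\<in>{}. (1 / real 1) * ln (norm0 (cocycle_iter T A 1 x)) \<partial>M)"
    by (simp add: set_lebesgue_integral_def)
  also have "\<dots> \<le> cocycle_omega M T A \<kappa>"
    unfolding cocycle_omega_def using assms by (intro SUP_upper2[of "{}"] SUP_upper) auto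
  finally show ?thesis .
qed

lemma cocycle_omega_le:
  assumes cocycle: "uniform_cocycle M T A" and K: "0 \<le> K"
  shows "cocycle_omega M T A \<kappa> \<le> ereal (K * \<kappa> + (\<integral>x. max (ln (norm0 (A x)) - K) 0 \<partial>M))"
  unfolding cocycle_omega_def
proof (intro SUP_least)
  fix U and N :: nat assume U: "U \<in> {U \<in> sets M. measure M U \<le> \<kappa>}" and N: "N \<in> {N. 0 < N}"
  have "prob_space M" and T: "T \<in> measurable M M" and "distr M M T = M"
    and inv: "\<And>x. x \<in> space M \<Longrightarrow> invertible (A x)"
    using cocycle by (auto simp: uniform_cocycle_def ergodic_map_def)
  have "(\<integral>x\<in>U. (1 / real N) * ln (norm0 (cocycle_iter T A N x)) \<partial>M)
      \<le> K * measure M U + (\<integral>x. max (ln (norm0 (A x)) - K) 0 \<partial>M)"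
  proof (rule set_integral_le_by_birkhoff_sum)
    show "finite_measure M" using \<open>prob_space M\<close> by (rule prob_space.finite_measure)
    show "integrable M (\<lambda>x. ln (norm0 (A x)))" using cocycle by (rule integrable_ln_norm0)
    fix x assume "x \<in> U"
    then have "x \<in> space M" using U sets.sets_into_space by blast
    then have "invertible (A ((T ^^ i) x))" for i
      by (intro inv measurable_space[OF measurable_compose_n[OF T]])
    then show "ln (norm0 (cocycle_iter T A N x)) \<le> (\<Sum>i<N. ln (norm0 (A ((T ^^ i) x))))"
      by (rule ln_norm0_cocycle_iter_le)
  qed (use U N K T \<open>distr M M T = M\<close> in auto)
  also have "\<dots> \<le> K * \<kappa> + (\<integral>x. max (ln (norm0 (A x)) - K) 0 \<partial>M)"
    using U K by (auto intro: mult_left_mono)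
  finally show "ereal (\<integral>x\<in>U. (1 / real N) * ln (norm0 (cocycle_iter T A N x)) \<partial>M)
      \<le> ereal (K * \<kappa> + (\<integral>x. max (ln (norm0 (A x)) - K) 0 \<partial>M))"
    by simp
qed

lemma tendsto_0_at_right_0_by_tail_bound:
  fixes \<omega> :: "real \<Rightarrow> ereal" and E :: "real \<Rightarrow> real"
  assumes E: "(E \<longlongrightarrow> 0) at_top"
    and nonneg: "\<And>\<kappa>. 0 < \<kappa> \<Longrightarrow> 0 \<le> \<omega> \<kappa>"
    and bound: "\<And>\<kappa> K. 0 \<le> K \<Longrightarrow> \<omega> \<kappa> \<le> ereal (K * \<kappa> + E K)"
  shows "(\<omega> \<longlongrightarrow> 0) (at_right 0)"
proof (rule order_tendstoI)
  fix a :: ereal assume "a < 0"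
  then show "\<forall>\<^sub>F \<kappa> in at_right 0. a < \<omega> \<kappa>"
    using nonneg by (intro eventually_at_rightI[of 0 1]) (auto intro: less_le_trans)
next
  fix a :: ereal assume "0 < a"
  then obtain e where e: "0 < e" "ereal e < a"
    using ereal_dense2 by (metis ereal_less(2) less_ereal.simps(1))
  have "\<forall>\<^sub>F K in at_top. 0 \<le> K \<and> E K < e / 2"
    using order_tendstoD(2)[OF E, of "e / 2"] eventually_ge_at_top[of 0] e(1)
    by (auto intro: eventually_conj)
  then obtain K where K: "0 \<le> K" "E K < e / 2"
    using eventually_happens'[OF trivial_limit_at_top_linorder] by blast
  define \<delta> where "\<delta> = e / (2 * (K + 1))"
  show "\<forall>\<^sub>F \<kappa> in at_right 0. \<omega> \<kappa> < a"
  proof (rule eventually_at_rightI)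
    show "0 < \<delta>" using e K by (simp add: \<delta>_def)
    fix \<kappa> assume "\<kappa> \<in> {0<..<\<delta>}"
    then have "K * \<kappa> \<le> K * \<delta>" using K by (intro mult_left_mono) auto
    also have "K * \<delta> \<le> e / 2" using K e by (simp add: \<delta>_def field_simps)
    finally have "ereal (K * \<kappa> + E K) < ereal e" using K by simp
    then show "\<omega> \<kappa> < a" using bound[OF K(1), of \<kappa>] e(2) by (meson le_less_trans less_trans)
  qed
qed

theorem lemma2p2:
  fixes M :: "'a measure" and T :: "'a \<Rightarrow> 'a" and A :: "'a \<Rightarrow> real^'p^'p"
  assumes "uniform_cocycle M T A"
  shows "((\<lambda>\<kappa>. cocycle_omega M T A \<kappa>) \<longlongrightarrow> 0) (at_right 0)"
proof (rule tendsto_0_at_right_0_by_tail_bound)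
  show "((\<lambda>K. \<integral>x. max (ln (norm0 (A x)) - K) 0 \<partial>M) \<longlongrightarrow> 0) at_top"
    using integrable_ln_norm0[OF assms] by (rule tendsto_integral_excess_at_top)
  show "0 \<le> cocycle_omega M T A \<kappa>" if "0 < \<kappa>" for \<kappa>
    using that by (intro cocycle_omega_nonneg) simp
  show "cocycle_omega M T A \<kappa> \<le> ereal (K * \<kappa> + (\<integral>x. max (ln (norm0 (A x)) - K) 0 \<partial>M))"
    if "0 \<le> K" for \<kappa> K
    using assms that by (rule cocycle_omega_le)
qed

end
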